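(* Let $\mathcal T$ be an atomic orbital category and $\mathcal C$ an almost essentially unital $\mathcal T$-weak indexing system. Then $\mathcal C=\mathrm{Cl}_\infty(\mathcal C\cap\underline{\mathbb F}^{sparse}_{\mathcal T})$, the smallest $\mathcal T$-weak indexing system containing all sparse elements of $\mathcal C$.
   Context: For a small category $\mathcal T$, $\mathbb F_{\mathcal T}$ is the full subcategory of $\mathrm{Fun}(\mathcal T^{op},\mathrm{Set})$ on finite coproducts of representables; $\mathcal T$ is orbital if $\mathbb F_{\mathcal T}$ has pullbacks, and atomic if every morphism of $\mathcal T$ admitting a section is an isomorphism. $\mathbb F_V:=\mathbb F_{\mathcal T,/V}$, $*_V$ terminal; for $U\to V$, $\mathrm{Res}^V_U$ is pullback and $\mathrm{Ind}^V_U$ postcomposition. A full $\mathcal T$-subcategory assigns isomorphism-closed classes $\mathcal C_V\subseteq\mathrm{Ob}\,\mathbb F_V$ stable under restriction. For $S\in\mathbb F_V$ with orbits $U$ and $T_U\in\mathbb F_U$, $\coprod_U^ST_U:=\coprod_U\mathrm{Ind}_U^VT_U$. A $\mathcal T$-weak indexing system is a full $\mathcal T$-subcategory with $\mathcal C_V\neq\emptyset\Rightarrow *_V\in\mathcal C_V$ and closed under $\coprod^S_UT_U$ for $S\in\mathcal C_V$, $T_U\in\mathcal C_U$; since intersections of weak indexing systems are weak indexing systems, every collection of finite sets is contained in a smallest one. It is almost essentially unital if whenever $S\sqcup S'\in\mathcal C_V$ is not isomorphic to $*_V$, we have $S,S'\in\mathcal C_V$. A $V$-set is sparse if it has the form $\varepsilon\cdot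 *_V\sqcup W_1\sqcup\cdots\sqcup W_n$ with $\varepsilon\in\{0,1\}$ and orbits $W_i\in\mathcal T_{/V}$ such that there is no map $W_i\to W_j$ in $\mathcal T_{/V}$ for $i\neq j$; $\mathcal C\cap\underline{\mathbb F}^{sparse}_{\mathcal T}$ is the collection $V\mapsto\{S\in\mathcal C_V\mid S\text{ sparse}\}$. *)

theory Defs
  imports Main
begin

text \<open>A small category: object set, arrow set, domain, codomain, identities and
composition (ccomp C g f is g after f).\<close>

record ('o, 'm) cat =
  cobj :: "'o set"
  carr :: "'m set"
  cdom :: "'m \<Rightarrow> 'o"
  ccod :: "'m \<Rightarrow> 'o"
  cid  :: "'o \<Rightarrow> 'm"
  ccomp :: "'m \<Rightarrow> 'm \<Rightarrow> 'm"

definition is_cat :: "('o, 'm) cat \<Rightarrow> bool" where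
  "is_cat C \<longleftrightarrow>
     (\<forall>f\<in>carr C. cdom C f \<in> cobj C \<and> ccod C f \<in> cobj C)
   \<and> (\<forall>a\<in>cobj C. cid C a \<in> carr C \<and> cdom C (cid C a) = a \<and> ccod C (cid C a) = a)
   \<and> (\<forall>f\<in>carr C. \<forall>g\<in>carr C. ccod C f = cdom C g \<longrightarrow>
        ccomp C g f \<in> carr C \<and> cdom C (ccomp C g f) = cdom C f \<and> ccod C (ccomp C g f) = ccod C g)
   \<and> (\<forall>f\<in>carr C. \<forall>g\<in>carr C. \<forall>h\<in>carr C. ccod C f = cdom C g \<longrightarrow> ccod C g = cdom C h \<longrightarrow>
        ccomp C h (ccomp C g f) = ccomp C (ccomp C h g) f)
   \<and> (\<forall>f\<in>carr C. ccomp C (cid C (ccod C f)) f = f \<and> ccomp C f (cid C (cdom C f)) = f)"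

definition is_iso :: "('o, 'm) cat \<Rightarrow> 'm \<Rightarrow> bool" where
  "is_iso C m \<longleftrightarrow> m \<in> carr C \<and> (\<exists>n\<in>carr C. cdom C n = ccod C m \<and> ccod C n = cdom C m
      \<and> ccomp C n m = cid C (cdom C m) \<and> ccomp C m n = cid C (ccod C m))"

definition atomic :: "('o, 'm) cat \<Rightarrow> bool" where
  "atomic C \<longleftrightarrow> (\<forall>m\<in>carr C. (\<exists>s\<in>carr C. cdom C s = ccod C m \<and> ccod C s = cdom C m
      \<and> ccomp C m s = cid C (ccod C m)) \<longrightarrow> is_iso C m)"

text \<open>By the Yoneda lemma, the full subcategory of presheaves on finite coproducts of
representables is (isomorphic to) the following: an object is a finite list of objects
[a_0,...,a_(n-1)] (standing for the coproduct of the representables), and a morphism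
from xs to ys is a list assigning to each i < length xs an index j < length ys together
with a morphism xs!i \<rightarrow> ys!j of T.\<close>

definition fobj :: "('o, 'm) cat \<Rightarrow> 'o list \<Rightarrow> bool" where
  "fobj C xs \<longleftrightarrow> set xs \<subseteq> cobj C"

definition fhom :: "('o, 'm) cat \<Rightarrow> 'o list \<Rightarrow> 'o list \<Rightarrow> (nat \<times> 'm) list \<Rightarrow> bool" where
  "fhom C xs ys f \<longleftrightarrow> length f = length xs \<and>
     (\<forall>i<length xs. fst (f!i) < length ys \<and> snd (f!i) \<in> carr C
        \<and> cdom C (snd (f!i)) = xs!i \<and> ccod C (snd (f!i)) = ys ! fst (f!i))"

definition fcomp :: "('o, 'm) cat \<Rightarrow> (nat \<times> 'm) list \<Rightarrow> (nat \<times> 'm) list \<Rightarrow> (nat \<times> 'm) list" where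
  "fcomp C g f = map (\<lambda>(j, m). (fst (g!j), ccomp C (snd (g!j)) m)) f"

definition fid :: "('o, 'm) cat \<Rightarrow> 'o list \<Rightarrow> (nat \<times> 'm) list" where
  "fid C xs = map (\<lambda>i. (i, cid C (xs!i))) [0..<length xs]"

definition fpullback ::
  "('o, 'm) cat \<Rightarrow> 'o list \<Rightarrow> 'o list \<Rightarrow> 'o list \<Rightarrow> (nat \<times> 'm) list \<Rightarrow> (nat \<times> 'm) list
   \<Rightarrow> 'o list \<Rightarrow> (nat \<times> 'm) list \<Rightarrow> (nat \<times> 'm) list \<Rightarrow> bool" where
  "fpullback C xs ys zs f g P p1 p2 \<longleftrightarrow>
     fobj C P \<and> fhom C P xs p1 \<and> fhom C P ys p2 \<and> fcomp C f p1 = fcomp C g p2 \<and>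
     (\<forall>Q q1 q2. fobj C Q \<and> fhom C Q xs q1 \<and> fhom C Q ys q2 \<and> fcomp C f q1 = fcomp C g q2 \<longrightarrow>
        (\<exists>!h. fhom C Q P h \<and> fcomp C p1 h = q1 \<and> fcomp C p2 h = q2))"

definition orbital :: "('o, 'm) cat \<Rightarrow> bool" where
  "orbital C \<longleftrightarrow> (\<forall>xs ys zs f g. fobj C xs \<and> fobj C ys \<and> fobj C zs \<and> fhom C xs zs f \<and> fhom C ys zs g
      \<longrightarrow> (\<exists>P p1 p2. fpullback C xs ys zs f g P p1 p2))"

text \<open>An object of F_V = F_T/V is a pair (xs, ms): a list of orbits xs together with
structure maps ms!i : xs!i \<rightarrow> V (this is a morphism xs \<rightarrow> [V] of F_T).\<close>

type_synonym ('o, 'm) vset = "'o list \<times> 'm list"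

definition tomor :: "'m list \<Rightarrow> (nat \<times> 'm) list" where
  "tomor ms = map (Pair 0) ms"

definition vobj :: "('o, 'm) cat \<Rightarrow> 'o \<Rightarrow> ('o, 'm) vset \<Rightarrow> bool" where
  "vobj C V S \<longleftrightarrow> V \<in> cobj C \<and> fobj C (fst S) \<and> fhom C (fst S) [V] (tomor (snd S))"

definition viso :: "('o, 'm) cat \<Rightarrow> 'o \<Rightarrow> ('o, 'm) vset \<Rightarrow> ('o, 'm) vset \<Rightarrow> bool" where
  "viso C V S S' \<longleftrightarrow> vobj C V S \<and> vobj C V S' \<and>
     (\<exists>h h'. fhom C (fst S) (fst S') h \<and> fhom C (fst S') (fst S) h'
        \<and> fcomp C h' h = fid C (fst S) \<and> fcomp C h h' = fid C (fst S')
        \<and> fcomp C (tomor (snd S')) h = tomor (snd S))"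

definition vstar :: "('o, 'm) cat \<Rightarrow> 'o \<Rightarrow> ('o, 'm) vset" where
  "vstar C V = ([V], [cid C V])"

definition vunion :: "('o, 'm) vset \<Rightarrow> ('o, 'm) vset \<Rightarrow> ('o, 'm) vset" where
  "vunion S S' = (fst S @ fst S', snd S @ snd S')"

definition is_restriction :: "('o, 'm) cat \<Rightarrow> 'm \<Rightarrow> ('o, 'm) vset \<Rightarrow> ('o, 'm) vset \<Rightarrow> bool" where
  "is_restriction C u S R \<longleftrightarrow>
     (\<exists>p1 p2. fpullback C (fst S) [cdom C u] [ccod C u] (tomor (snd S)) [(0, u)] (fst R) p1 p2
        \<and> p2 = tomor (snd R))"

definition vind :: "('o, 'm) cat \<Rightarrow> 'm \<Rightarrow> ('o, 'm) vset \<Rightarrow> ('o, 'm) vset" where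
  "vind C u T = (fst T, map (ccomp C u) (snd T))"

text \<open>For S in F_V with orbits U_i = (fst S)!i (structure map (snd S)!i) and T_i in F_(U_i),
the V-set coprod over i of Ind_(U_i)^V T_i.\<close>
definition vcoprod :: "('o, 'm) cat \<Rightarrow> ('o, 'm) vset \<Rightarrow> (nat \<Rightarrow> ('o, 'm) vset) \<Rightarrow> ('o, 'm) vset" where
  "vcoprod C S T =
     (concat (map (\<lambda>i. fst (vind C (snd S ! i) (T i))) [0..<length (fst S)]),
      concat (map (\<lambda>i. snd (vind C (snd S ! i) (T i))) [0..<length (fst S)]))"

type_synonym ('o, 'm) tcoll = "'o \<Rightarrow> ('o, 'm) vset \<Rightarrow> bool"

definition full_tsubcat :: "('o, 'm) cat \<Rightarrow> ('o, 'm) tcoll \<Rightarrow> bool" where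
  "full_tsubcat C \<C> \<longleftrightarrow>
     (\<forall>V S. \<C> V S \<longrightarrow> vobj C V S)
   \<and> (\<forall>V S S'. \<C> V S \<and> viso C V S S' \<longrightarrow> \<C> V S')
   \<and> (\<forall>u S R. u \<in> carr C \<and> \<C> (ccod C u) S \<and> is_restriction C u S R \<longrightarrow> \<C> (cdom C u) R)"

definition weak_indexing_system :: "('o, 'm) cat \<Rightarrow> ('o, 'm) tcoll \<Rightarrow> bool" where
  "weak_indexing_system C \<C> \<longleftrightarrow>
     full_tsubcat C \<C>
   \<and> (\<forall>V. (\<exists>S. \<C> V S) \<longrightarrow> \<C> V (vstar C V))
   \<and> (\<forall>V S T. \<C> V S \<and> (\<forall>i<length (fst S). \<C> (fst S ! i) (T i)) \<longrightarrow> \<C> V (vcoprod C S T))"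

definition almost_essentially_unital :: "('o, 'm) cat \<Rightarrow> ('o, 'm) tcoll \<Rightarrow> bool" where
  "almost_essentially_unital C \<C> \<longleftrightarrow>
     (\<forall>V S S'. vobj C V S \<and> vobj C V S' \<and> \<C> V (vunion S S') \<and> \<not> viso C V (vunion S S') (vstar C V)
        \<longrightarrow> \<C> V S \<and> \<C> V S')"

definition wis_closure :: "('o, 'm) cat \<Rightarrow> ('o, 'm) tcoll \<Rightarrow> ('o, 'm) tcoll" where
  "wis_closure C D = (\<lambda>V S. \<forall>\<C>'. weak_indexing_system C \<C>' \<and> (\<forall>W R. D W R \<longrightarrow> \<C>' W R) \<longrightarrow> \<C>' V S)"

text \<open>A V-set is sparse if it is (isomorphic to) eps * V \<squnion> W_1 \<squnion> ... \<squnion> W_n, with orbits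
W_i = (W_i, w_i : W_i \<rightarrow> V) in T/V and no map W_i \<rightarrow> W_j in T/V for i \<noteq> j.\<close>
definition sparse :: "('o, 'm) cat \<Rightarrow> 'o \<Rightarrow> ('o, 'm) vset \<Rightarrow> bool" where
  "sparse C V S \<longleftrightarrow> vobj C V S \<and>
     (\<exists>(eps::bool) (Ws :: ('o \<times> 'm) list).
        (\<forall>k<length Ws. fst (Ws!k) \<in> cobj C \<and> snd (Ws!k) \<in> carr C
            \<and> cdom C (snd (Ws!k)) = fst (Ws!k) \<and> ccod C (snd (Ws!k)) = V)
      \<and> (\<forall>i<length Ws. \<forall>j<length Ws. i \<noteq> j \<longrightarrow>
            \<not> (\<exists>m\<in>carr C. cdom C m = fst (Ws!i) \<and> ccod C m = fst (Ws!j)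
                  \<and> ccomp C (snd (Ws!j)) m = snd (Ws!i)))
      \<and> viso C V S (vunion (if eps then vstar C V else ([], [])) (map fst Ws, map snd Ws)))"

definition sparse_part :: "('o, 'm) cat \<Rightarrow> ('o, 'm) tcoll \<Rightarrow> ('o, 'm) tcoll" where
  "sparse_part C \<C> = (\<lambda>V S. \<C> V S \<and> sparse C V S)"

end

theory Submission
  imports Defs
begin

(* Induction on the number of orbits of S in C_V. If no orbit x_i of S maps to another orbit x_j
   over V, then S is sparse. Otherwise fix such a map m : x_i -> x_j. Deleting x_i leaves an
   element S1 of C_V (almost essential unitality, as S has at least two orbits), which lies in the
   closure by induction. Restricting S along x_j -> V, the identity of x_j and m lift to two
   distinct orbits of the pullback, and atomicity makes them isomorphic to x_j and to (x_i, m);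
   almost essential unitality once more puts the sparse x_j-set *_{x_j} + (x_i, m) into C.
   Inducing it along x_j -> V and taking the terminal set over every other orbit of S1
   reassembles S from S1 inside the closure. *)

lemma vobj_iff:
  "vobj C V (xs, ms) \<longleftrightarrow> V \<in> cobj C \<and> set xs \<subseteq> cobj C \<and> length ms = length xs \<and>
     (\<forall>i<length xs. ms!i \<in> carr C \<and> cdom C (ms!i) = xs!i \<and> ccod C (ms!i) = V)"
  unfolding vobj_def fobj_def fhom_def tomor_def by auto

lemma is_catD:
  assumes "is_cat C"
  shows "\<And>f. f \<in> carr C \<Longrightarrow> cdom C f \<in> cobj C \<and> ccod C f \<in> cobj C"
    and "\<And>a. a \<in> cobj C \<Longrightarrow> cid C a \<in> carr C \<and> cdom C (cid C a) = a \<and> ccod C (cid C a) = a"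
    and "\<And>f g h. f \<in> carr C \<Longrightarrow> g \<in> carr C \<Longrightarrow> h \<in> carr C \<Longrightarrow> ccod C f = cdom C g \<Longrightarrow>
        ccod C g = cdom C h \<Longrightarrow> ccomp C h (ccomp C g f) = ccomp C (ccomp C h g) f"
    and "\<And>f. f \<in> carr C \<Longrightarrow> ccomp C (cid C (ccod C f)) f = f"
    and "\<And>f. f \<in> carr C \<Longrightarrow> ccomp C f (cid C (cdom C f)) = f"
  using assms unfolding is_cat_def by blast+

definition inverse_arrows :: "('o, 'm) cat \<Rightarrow> 'm \<Rightarrow> 'm \<Rightarrow> bool" where
  "inverse_arrows C f g \<longleftrightarrow> f \<in> carr C \<and> g \<in> carr C \<and> cdom C g = ccod C f \<and> ccod C g = cdom C f
     \<and> ccomp C g f = cid C (cdom C f) \<and> ccomp C f g = cid C (ccod C f)"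

lemma inverse_arrows_cid:
  assumes "is_cat C" and "a \<in> cobj C"
  shows "inverse_arrows C (cid C a) (cid C a)"
  using is_catD(2,4)[OF assms(1)] assms(2) unfolding inverse_arrows_def by metis

lemma atomic_section_inverse:
  assumes cat: "is_cat C" and "atomic C" and f: "f \<in> carr C" and s: "s \<in> carr C"
    and s_dom: "cdom C s = ccod C f" and s_cod: "ccod C s = cdom C f"
    and f_s: "ccomp C f s = cid C (ccod C f)"
  shows "inverse_arrows C f s"
proof -
  have "is_iso C f" using assms unfolding atomic_def by blast
  then obtain k where k: "k \<in> carr C" "cdom C k = ccod C f" "ccod C k = cdom C f"
      "ccomp C k f = cid C (cdom C f)"
    unfolding is_iso_def by blast
  have "k = ccomp C k (ccomp C f s)" using is_catD(5)[OF cat k(1)] k f_s by simp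
  also have "\<dots> = ccomp C (ccomp C k f) s" using is_catD(3)[OF cat s f k(1)] s_cod k by simp
  also have "\<dots> = s" using k is_catD(4)[OF cat s] s_cod by simp
  finally show ?thesis using k f s s_dom s_cod f_s unfolding inverse_arrows_def by simp
qed

definition vselect :: "('o, 'm) vset \<Rightarrow> nat list \<Rightarrow> ('o, 'm) vset" where
  "vselect S L = (map ((!) (fst S)) L, map ((!) (snd S)) L)"

lemma vobj_vselect:
  assumes "vobj C V S" and "set L \<subseteq> {..<length (fst S)}"
  shows "vobj C V (vselect S L)"
  using assms by (cases S) (auto simp: vobj_iff vselect_def subset_iff)

lemma viso_reindex:
  assumes vx: "vobj C V (xs, ms)" and vy: "vobj C V (ys, ns)"
    and len: "length xs = n" "length ys = n" and r: "bij_betw r {..<n} {..<n}"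
    and g: "\<And>p. p < n \<Longrightarrow> inverse_arrows C (g p) (g' p) \<and> cdom C (g p) = ys!p
      \<and> ccod C (g p) = xs!(r p) \<and> ccomp C (ms!(r p)) (g p) = ns!p"
  shows "viso C V (ys, ns) (xs, ms)"
proof -
  define q where "q = inv_into {..<n} r"
  have r_lt: "r p < n" and q_r: "q (r p) = p" if "p < n" for p
    using that r bij_betw_apply bij_betw_inv_into_left unfolding q_def by fastforce+
  have q_lt: "q k < n" and r_q: "r (q k) = k" if "k < n" for k
    using that bij_betw_inv_into[OF r] bij_betw_apply bij_betw_inv_into_right[OF r]
    unfolding q_def by fastforce+
  have g_inv: "ccomp C (g' p) (g p) = cid C (ys!p)" "ccomp C (g p) (g' p) = cid C (xs!(r p))"
    if "p < n" for p
    using g[OF that] unfolding inverse_arrows_def by auto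
  have lm: "length ms = n" "length ns = n" using vx vy len by (auto simp: vobj_iff)
  define h where "h = map (\<lambda>p. (r p, g p)) [0..<n]"
  define h' where "h' = map (\<lambda>k. (q k, g' (q k))) [0..<n]"
  have "fhom C ys xs h"
    unfolding fhom_def h_def using len r_lt g by (auto simp: inverse_arrows_def)
  moreover have "fhom C xs ys h'"
    unfolding fhom_def h'_def using len q_lt g[OF q_lt] r_q by (auto simp: inverse_arrows_def)
  moreover have "fcomp C h' h = fid C ys"
    by (rule nth_equalityI) (auto simp: fcomp_def fid_def h_def h'_def len r_lt q_r g_inv)
  moreover have "fcomp C h h' = fid C xs"
    by (rule nth_equalityI) (auto simp: fcomp_def fid_def h_def h'_def len q_lt r_q g_inv)
  moreover have "fcomp C (tomor ms) h = tomor ns"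
    by (rule nth_equalityI) (auto simp: fcomp_def tomor_def h_def lm r_lt g)
  ultimately show ?thesis using vx vy unfolding viso_def by auto
qed

lemma viso_vselect_perm:
  assumes cat: "is_cat C" and v: "vobj C V S"
    and L: "distinct L" "set L = {..<length (fst S)}"
  shows "viso C V (vselect S L) S" and "viso C V S (vselect S L)"
proof -
  obtain xs ms where S: "S = (xs, ms)" by (cases S)
  define n where "n = length xs"
  have lL: "length L = n" using distinct_card[OF L(1)] L(2) S n_def by simp
  have bij: "bij_betw ((!) L) {..<n} {..<n}" using bij_betw_nth[OF L(1)] L(2) lL S n_def by simp
  have vo: "ms!k \<in> carr C \<and> cdom C (ms!k) = xs!k \<and> xs!k \<in> cobj C" if "k < n" for k
    using v that S n_def by (auto simp: vobj_iff)
  have unit: "inverse_arrows C (cid C (xs!k)) (cid C (xs!k)) \<and> cdom C (cid C (xs!k)) = xs!k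
      \<and> ccod C (cid C (xs!k)) = xs!k \<and> ccomp C (ms!k) (cid C (xs!k)) = ms!k" if "k < n" for k
    using vo[OF that] inverse_arrows_cid[OF cat] is_catD(2)[OF cat] is_catD(5)[OF cat, of "ms!k"]
    by simp
  have vL: "vobj C V (vselect S L)" using vobj_vselect[OF v] L(2) by simp
  show "viso C V (vselect S L) S"
    unfolding S vselect_def fst_conv snd_conv
  proof (rule viso_reindex[where r="(!) L" and n=n and g="\<lambda>p. cid C (xs!(L!p))"])
    fix p assume "p < n"
    then show "inverse_arrows C (cid C (xs!(L!p))) (cid C (xs!(L!p))) \<and>
        cdom C (cid C (xs!(L!p))) = map ((!) xs) L ! p \<and> ccod C (cid C (xs!(L!p))) = xs!(L!p) \<and>
        ccomp C (ms!(L!p)) (cid C (xs!(L!p))) = map ((!) ms) L ! p"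
      using unit bij_betw_apply[OF bij] lL by auto
  qed (use v vL S n_def lL bij in \<open>auto simp: vselect_def\<close>)
  define q where "q = inv_into {..<n} ((!) L)"
  have bij_q: "bij_betw q {..<n} {..<n}" using bij_betw_inv_into[OF bij] q_def by simp
  have L_q: "L!(q k) = k" if "k < n" for k
    using bij_betw_inv_into_right[OF bij] that q_def by simp
  show "viso C V S (vselect S L)"
    unfolding S vselect_def fst_conv snd_conv
  proof (rule viso_reindex[where r=q and n=n and g="\<lambda>p. cid C (xs!p)"])
    fix p assume "p < n"
    then show "inverse_arrows C (cid C (xs!p)) (cid C (xs!p)) \<and> cdom C (cid C (xs!p)) = xs!p \<and>
        ccod C (cid C (xs!p)) = map ((!) xs) L ! q p \<and>
        ccomp C (map ((!) ms) L ! q p) (cid C (xs!p)) = ms!p"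
      using unit L_q bij_betw_apply[OF bij_q] lL by auto
  qed (use v vL S n_def lL bij_q in \<open>auto simp: vselect_def\<close>)
qed

lemma viso_refl:
  assumes "is_cat C" and "vobj C V S"
  shows "viso C V S S"
proof -
  obtain xs ms where S: "S = (xs, ms)" by (cases S)
  have "length ms = length xs" using assms(2) S by (simp add: vobj_iff)
  then have "vselect S [0..<length (fst S)] = S"
    unfolding S vselect_def by (auto intro: nth_equalityI)
  then show ?thesis
    using viso_vselect_perm(1)[OF assms, of "[0..<length (fst S)]"] by (simp add: atLeast0LessThan)
qed

lemma viso_vstar_length:
  assumes "viso C V S (vstar C V)"
  shows "length (fst S) \<le> 1"
proof (rule ccontr)
  assume "\<not> length (fst S) \<le> 1"
  then have l: "0 < length (fst S)" "1 < length (fst S)" by auto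
  from assms obtain h h' where h: "fhom C (fst S) [V] h" and e: "fcomp C h' h = fid C (fst S)"
    unfolding viso_def vstar_def by auto
  have "fst (h!0) = 0" "fst (h!1) = 0" "length h = length (fst S)"
    using h l unfolding fhom_def by auto
  moreover have "fst (fcomp C h' h ! 0) = 0" "fst (fcomp C h' h ! 1) = 1"
    using e l by (auto simp: fid_def)
  moreover have "fst (fcomp C h' h ! k) = fst (h' ! fst (h!k))" if "k < length h" for k
    using that by (simp add: fcomp_def split: prod.split)
  ultimately show False using l by simp
qed

lemma weak_indexing_systemD:
  assumes "weak_indexing_system C D"
  shows "\<And>V S. D V S \<Longrightarrow> vobj C V S"
    and "\<And>V S S'. D V S \<Longrightarrow> viso C V S S' \<Longrightarrow> D V S'"
    and "\<And>u S R. u \<in> carr C \<Longrightarrow> D (ccod C u) S \<Longrightarrow> is_restriction C u S R \<Longrightarrow>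
      D (cdom C u) R"
    and "\<And>V S. D V S \<Longrightarrow> D V (vstar C V)"
    and "\<And>V S T. D V S \<Longrightarrow> (\<And>i. i < length (fst S) \<Longrightarrow> D (fst S ! i) (T i)) \<Longrightarrow>
      D V (vcoprod C S T)"
  using assms unfolding weak_indexing_system_def full_tsubcat_def by blast+

lemma aeu_vselect:
  assumes cat: "is_cat C" and wis: "weak_indexing_system C D"
    and aeu: "almost_essentially_unital C D" and S: "D V S" and two: "2 \<le> length (fst S)"
    and L: "distinct L" "set L \<subseteq> {..<length (fst S)}"
  shows "D V (vselect S L)"
proof -
  define L' where "L' = filter (\<lambda>k. k \<notin> set L) [0..<length (fst S)]"
  have v: "vobj C V S" using weak_indexing_systemD(1)[OF wis S] .
  have perm: "distinct (L @ L')" "set (L @ L') = {..<length (fst S)}"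
    using L unfolding L'_def by auto
  have union: "vunion (vselect S L) (vselect S L') = vselect S (L @ L')"
    by (simp add: vunion_def vselect_def)
  have "D V (vunion (vselect S L) (vselect S L'))"
    using weak_indexing_systemD(2)[OF wis S viso_vselect_perm(2)[OF cat v perm]] union by simp
  moreover have "length (fst (vselect S (L @ L'))) = length (fst S)"
    using distinct_card[OF perm(1)] perm(2) by (simp add: vselect_def)
  then have "\<not> viso C V (vunion (vselect S L) (vselect S L')) (vstar C V)"
    using viso_vstar_length two union by fastforce
  moreover have "vobj C V (vselect S L)" "vobj C V (vselect S L')"
    using vobj_vselect[OF v, of L] vobj_vselect[OF v, of L'] L(2) unfolding L'_def by auto
  ultimately show ?thesis using aeu unfolding almost_essentially_unital_def by blast
qed

lemma orbital_restriction_exists: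
  assumes cat: "is_cat C" and orb: "orbital C" and v: "vobj C V (xs, ms)"
    and u: "u \<in> carr C" "ccod C u = V"
  obtains P p1 p2 where "fpullback C xs [cdom C u] [V] (tomor ms) [(0, u)] P p1 p2"
    and "is_restriction C u (xs, ms) (P, map snd p2)"
proof -
  have "fobj C xs" "fhom C xs [V] (tomor ms)" "V \<in> cobj C" using v by (auto simp: vobj_def)
  moreover have "fobj C [cdom C u]" "fobj C [V]"
    using is_catD(1)[OF cat u(1)] u(2) \<open>V \<in> cobj C\<close> by (auto simp: fobj_def)
  moreover have "fhom C [cdom C u] [V] [(0, u)]" using u by (simp add: fhom_def)
  ultimately obtain P p1 p2 where pb: "fpullback C xs [cdom C u] [V] (tomor ms) [(0, u)] P p1 p2"
    using orb unfolding orbital_def by blast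
  then have "fhom C P [cdom C u] p2" by (simp add: fpullback_def)
  then have "p2 = tomor (map snd p2)"
    unfolding fhom_def tomor_def by (intro nth_equalityI) (auto simp: prod_eq_iff)
  then have "is_restriction C u (xs, ms) (P, map snd p2)"
    using pb u unfolding is_restriction_def by auto
  with pb show thesis using that by blast
qed

lemma wis_vstar_cdom:
  assumes cat: "is_cat C" and orb: "orbital C" and wis: "weak_indexing_system C D"
    and S: "D V S" and u: "u \<in> carr C" "ccod C u = V"
  shows "D (cdom C u) (vstar C (cdom C u))"
proof -
  obtain xs ms where S_eq: "S = (xs, ms)" by (cases S)
  have v: "vobj C V (xs, ms)" using weak_indexing_systemD(1)[OF wis S] S_eq by simp
  obtain P p1 p2 where "fpullback C xs [cdom C u] [V] (tomor ms) [(0, u)] P p1 p2"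
    and res: "is_restriction C u (xs, ms) (P, map snd p2)"
    by (rule orbital_restriction_exists[OF cat orb v u])
  have "D (ccod C u) (xs, ms)" using S S_eq u(2) by simp
  then have "D (cdom C u) (P, map snd p2)" by (rule weak_indexing_systemD(3)[OF wis u(1) _ res])
  then show ?thesis by (rule weak_indexing_systemD(4)[OF wis])
qed

lemma pullback_point:
  assumes cat: "is_cat C" and pb: "fpullback C xs [cdom C u] [V] (tomor ms) [(0, u)] P p1 p2"
    and v: "vobj C V (xs, ms)" and k: "k < length xs"
    and w: "w \<in> carr C" "cdom C w = xs!k" "ccod C w = cdom C u" and u: "ccomp C u w = ms!k"
  obtains a g where "a < length P" "fst (p1!a) = k"
    "g \<in> carr C" "cdom C g = xs!k" "ccod C g = P!a"
    "ccomp C (snd (p1!a)) g = cid C (xs!k)" "ccomp C (snd (p2!a)) g = w"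
proof -
  have vk: "ms!k \<in> carr C" "cdom C (ms!k) = xs!k" "xs!k \<in> cobj C" "length ms = length xs"
    using v k by (auto simp: vobj_iff)
  have "fobj C [xs!k]" using vk by (simp add: fobj_def)
  moreover have "fhom C [xs!k] xs [(k, cid C (xs!k))]"
    using k is_catD(2)[OF cat vk(3)] by (simp add: fhom_def)
  moreover have "fhom C [xs!k] [cdom C u] [(0, w)]" using w by (simp add: fhom_def)
  moreover have "fcomp C (tomor ms) [(k, cid C (xs!k))] = fcomp C [(0, u)] [(0, w)]"
    using k vk is_catD(5)[OF cat vk(1)] u by (simp add: fcomp_def tomor_def)
  ultimately obtain h where h: "fhom C [xs!k] P h"
      "fcomp C p1 h = [(k, cid C (xs!k))]" "fcomp C p2 h = [(0, w)]"
    using pb unfolding fpullback_def by blast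
  obtain a g where "h = [(a, g)]"
    using h(1) unfolding fhom_def by (auto simp: length_Suc_conv)
  with h show thesis using that unfolding fhom_def by (auto simp: fcomp_def)
qed

lemma atomic_pullback_point:
  assumes cat: "is_cat C" and atm: "atomic C"
    and pb: "fpullback C xs [cdom C u] [V] (tomor ms) [(0, u)] P p1 p2"
    and v: "vobj C V (xs, ms)" and k: "k < length xs"
    and w: "w \<in> carr C" "cdom C w = xs!k" "ccod C w = cdom C u" and u: "ccomp C u w = ms!k"
  obtains a g where "a < length P" "fst (p1!a) = k" "inverse_arrows C (snd (p1!a)) g"
    "cdom C (snd (p1!a)) = P!a" "ccod C (snd (p1!a)) = xs!k"
    "ccomp C w (snd (p1!a)) = snd (p2!a)"
proof -
  obtain a g where a: "a < length P" "fst (p1!a) = k"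
      "g \<in> carr C" "cdom C g = xs!k" "ccod C g = P!a"
      "ccomp C (snd (p1!a)) g = cid C (xs!k)" "ccomp C (snd (p2!a)) g = w"
    by (rule pullback_point[OF cat pb v k w u])
  have "fhom C P xs p1" "fhom C P [cdom C u] p2" using pb by (auto simp: fpullback_def)
  then have p1a: "snd (p1!a) \<in> carr C" "cdom C (snd (p1!a)) = P!a" "ccod C (snd (p1!a)) = xs!k"
    and p2a: "snd (p2!a) \<in> carr C" "cdom C (snd (p2!a)) = P!a"
    using a unfolding fhom_def by auto
  have inv: "inverse_arrows C (snd (p1!a)) g"
    using atomic_section_inverse[OF cat atm p1a(1) a(3)] p1a a by simp
  have "ccomp C w (snd (p1!a)) = ccomp C (snd (p2!a)) (ccomp C g (snd (p1!a)))"
    using is_catD(3)[OF cat p1a(1) a(3) p2a(1)] a p1a p2a by simp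
  also have "\<dots> = snd (p2!a)"
    using inv p1a p2a is_catD(5)[OF cat p2a(1)] unfolding inverse_arrows_def by simp
  finally show thesis using that a p1a inv by blast
qed

lemma aeu_restriction_orbit_pair:
  assumes cat: "is_cat C" and orb: "orbital C" and atm: "atomic C"
    and wis: "weak_indexing_system C D" and aeu: "almost_essentially_unital C D"
    and S: "D V (xs, ms)" and ij: "i < length xs" "j < length xs" "i \<noteq> j"
    and m: "m \<in> carr C" "cdom C m = xs!i" "ccod C m = xs!j" "ccomp C (ms!j) m = ms!i"
  shows "D (xs!j) ([xs!j, xs!i], [cid C (xs!j), m])"
proof -
  have v: "vobj C V (xs, ms)" using weak_indexing_systemD(1)[OF wis S] .
  have u: "ms!j \<in> carr C" "ccod C (ms!j) = V" "cdom C (ms!j) = xs!j" "xs!j \<in> cobj C"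
    using v ij by (auto simp: vobj_iff)
  obtain P p1 p2 where pb: "fpullback C xs [cdom C (ms!j)] [V] (tomor ms) [(0, ms!j)] P p1 p2"
      and res: "is_restriction C (ms!j) (xs, ms) (P, map snd p2)"
    by (rule orbital_restriction_exists[OF cat orb v u(1,2)])
  have R: "D (xs!j) (P, map snd p2)"
    using weak_indexing_systemD(3)[OF wis u(1) _ res] S u by simp
  obtain a ga where a: "a < length P" "fst (p1!a) = i" "inverse_arrows C (snd (p1!a)) ga"
      "cdom C (snd (p1!a)) = P!a" "ccod C (snd (p1!a)) = xs!i"
      "ccomp C m (snd (p1!a)) = snd (p2!a)"
    by (rule atomic_pullback_point[OF cat atm pb v ij(1) m(1,2) m(3)[folded u(3)] m(4)])
  have unit: "cid C (xs!j) \<in> carr C" "cdom C (cid C (xs!j)) = xs!j"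
      "ccod C (cid C (xs!j)) = cdom C (ms!j)" "ccomp C (ms!j) (cid C (xs!j)) = ms!j"
    using is_catD(2)[OF cat u(4)] is_catD(5)[OF cat u(1)] u(3) by auto
  obtain b gb where b: "b < length P" "fst (p1!b) = j" "inverse_arrows C (snd (p1!b)) gb"
      "cdom C (snd (p1!b)) = P!b" "ccod C (snd (p1!b)) = xs!j"
      "ccomp C (cid C (xs!j)) (snd (p1!b)) = snd (p2!b)"
    by (rule atomic_pullback_point[OF cat atm pb v ij(2) unit])
  have "length p2 = length P" using pb by (simp add: fpullback_def fhom_def)
  then have sel: "vselect (P, map snd p2) [b, a] = ([P!b, P!a], [snd (p2!b), snd (p2!a)])"
    using a b by (simp add: vselect_def)
  have "a \<noteq> b" using a(2) b(2) ij(3) by auto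
  then have "D (xs!j) ([P!b, P!a], [snd (p2!b), snd (p2!a)])"
    using aeu_vselect[OF cat wis aeu R, of "[b, a]"] a(1) b(1) sel by simp
  moreover have "viso C (xs!j) ([P!b, P!a], [snd (p2!b), snd (p2!a)])
      ([xs!j, xs!i], [cid C (xs!j), m])"
  proof (rule viso_reindex[where n=2 and r=id and g="\<lambda>p. [snd (p1!b), snd (p1!a)] ! p"
        and g'="\<lambda>p. [gb, ga] ! p"])
    show "vobj C (xs!j) ([xs!j, xs!i], [cid C (xs!j), m])"
      using u(4) m ij v is_catD(2)[OF cat u(4)] by (auto simp: vobj_iff less_Suc_eq)
    show "vobj C (xs!j) ([P!b, P!a], [snd (p2!b), snd (p2!a)])"
      using weak_indexing_systemD(1)[OF wis] \<open>D (xs!j) ([P!b, P!a], [snd (p2!b), snd (p2!a)])\<close> .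
    fix p :: nat assume "p < 2"
    then consider "p = 0" | "p = 1" by linarith
    then show "inverse_arrows C ([snd (p1!b), snd (p1!a)] ! p) ([gb, ga] ! p) \<and>
        cdom C ([snd (p1!b), snd (p1!a)] ! p) = [P!b, P!a] ! p \<and>
        ccod C ([snd (p1!b), snd (p1!a)] ! p) = [xs!j, xs!i] ! id p \<and>
        ccomp C ([cid C (xs!j), m] ! id p) ([snd (p1!b), snd (p1!a)] ! p) =
          [snd (p2!b), snd (p2!a)] ! p"
      by cases (use a b in auto)
  qed auto
  ultimately show ?thesis using weak_indexing_systemD(2)[OF wis] by blast
qed

lemma vcoprod_vstar_tail:
  assumes cat: "is_cat C" and v: "vobj C V (x # xs, u # us)"
  shows "vcoprod C (x # xs, u # us) (\<lambda>k. if k = 0 then T else vstar C ((x # xs) ! k))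
    = (fst T @ xs, map (ccomp C u) (snd T) @ us)"
proof -
  have us: "ccomp C (us!k) (cid C (xs!k)) = us!k" if "k < length xs" for k
    using v that is_catD(5)[OF cat, of "us!k"] unfolding vobj_iff by fastforce
  have "length us = length xs" using v by (simp add: vobj_iff)
  then have "map (\<lambda>k. ccomp C (us!k) (cid C (xs!k))) [0..<length xs] = us"
    by (intro nth_equalityI) (simp_all add: us)
  moreover have "[0..<length (x # xs)] = 0 # map Suc [0..<length xs]"
    by (simp add: upt_conv_Cons map_Suc_upt del: upt_Suc)
  ultimately show ?thesis
    unfolding vcoprod_def by (simp add: vind_def vstar_def us map_nth cong: map_cong)
qed

lemma wis_glue_orbit:
  assumes cat: "is_cat C" and orb: "orbital C" and wis: "weak_indexing_system C D"
    and v: "vobj C V (xs, ms)"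
    and L: "distinct (j # i # L)" "set (j # i # L) = {..<length xs}"
    and m: "m \<in> carr C" "ccomp C (ms!j) m = ms!i"
    and S1: "D V (vselect (xs, ms) (j # L))"
    and T0: "D (xs!j) ([xs!j, xs!i], [cid C (xs!j), m])"
  shows "D V (xs, ms)"
proof -
  define T where "T = ([xs!j, xs!i], [cid C (xs!j), m])"
  let ?S1 = "vselect (xs, ms) (j # L)"
  define Tf where "Tf = (\<lambda>k. if k = 0 then T else vstar C (fst ?S1 ! k))"
  have sel: "?S1 = (xs!j # map ((!) xs) L, ms!j # map ((!) ms) L)" by (simp add: vselect_def)
  have "set (j # L) \<subseteq> {..<length xs}" using L(2) by auto
  then have vS1: "vobj C V ?S1" using vobj_vselect[OF v] by simp
  have "D V (vcoprod C ?S1 Tf)"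
  proof (rule weak_indexing_systemD(5)[OF wis S1])
    fix k assume k: "k < length (fst ?S1)"
    show "D (fst ?S1 ! k) (Tf k)"
    proof (cases "k = 0")
      case True
      then show ?thesis using T0 by (simp add: Tf_def T_def vselect_def)
    next
      case False
      have u: "snd ?S1 ! k \<in> carr C" "ccod C (snd ?S1 ! k) = V"
        and dom: "cdom C (snd ?S1 ! k) = fst ?S1 ! k"
        using vS1 k unfolding vselect_def fst_conv snd_conv vobj_iff by blast+
      show ?thesis
        using wis_vstar_cdom[OF cat orb wis S1 u] False unfolding dom by (simp add: Tf_def)
    qed
  qed
  moreover have "vcoprod C ?S1 Tf = vselect (xs, ms) (j # i # L)"
  proof -
    have "cdom C (ms!j) = xs!j" "ms!j \<in> carr C" using v L by (auto simp: vobj_iff)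
    then have "ccomp C (ms!j) (cid C (xs!j)) = ms!j" using is_catD(5)[OF cat] by metis
    moreover have "vcoprod C ?S1 Tf =
        (fst T @ map ((!) xs) L, map (ccomp C (ms!j)) (snd T) @ map ((!) ms) L)"
      using vcoprod_vstar_tail[OF cat, of V "xs!j" "map ((!) xs) L" "ms!j" "map ((!) ms) L" T] vS1
      unfolding Tf_def sel fst_conv by simp
    ultimately show ?thesis using m by (simp add: T_def vselect_def)
  qed
  ultimately show ?thesis
    using weak_indexing_systemD(2)[OF wis _ viso_vselect_perm(1)[OF cat v]] L by simp
qed

lemma sparse_if_no_map_between_orbits:
  assumes cat: "is_cat C" and v: "vobj C V (xs, ms)"
    and no_map: "\<And>i j m. i < length xs \<Longrightarrow> j < length xs \<Longrightarrow> i \<noteq> j \<Longrightarrow> m \<in> carr C \<Longrightarrow>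
      cdom C m = xs!i \<Longrightarrow> ccod C m = xs!j \<Longrightarrow> ccomp C (ms!j) m \<noteq> ms!i"
  shows "sparse C V (xs, ms)"
  unfolding sparse_def
proof (intro conjI exI)
  have lm: "length ms = length xs" using v by (simp add: vobj_iff)
  show "vobj C V (xs, ms)" by fact
  show "\<forall>k<length (zip xs ms). fst (zip xs ms ! k) \<in> cobj C \<and> snd (zip xs ms ! k) \<in> carr C
      \<and> cdom C (snd (zip xs ms ! k)) = fst (zip xs ms ! k) \<and> ccod C (snd (zip xs ms ! k)) = V"
    using v lm by (auto simp: vobj_iff)
  show "\<forall>i<length (zip xs ms). \<forall>j<length (zip xs ms). i \<noteq> j \<longrightarrow>
      \<not> (\<exists>m\<in>carr C. cdom C m = fst (zip xs ms ! i) \<and> ccod C m = fst (zip xs ms ! j)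
        \<and> ccomp C (snd (zip xs ms ! j)) m = snd (zip xs ms ! i))"
    using no_map lm by auto
  show "viso C V (xs, ms)
      (vunion (if False then vstar C V else ([], [])) (map fst (zip xs ms), map snd (zip xs ms)))"
    using viso_refl[OF cat v] lm by (simp add: vunion_def)
qed

lemma sparse_vstar_vunion_orbit:
  assumes cat: "is_cat C" and v: "vobj C U ([U, X], [cid C U, m])"
  shows "sparse C U ([U, X], [cid C U, m])"
  unfolding sparse_def
proof (intro conjI exI)
  show "vobj C U ([U, X], [cid C U, m])" by fact
  show "\<forall>k<length [(X, m)]. fst ([(X, m)] ! k) \<in> cobj C \<and> snd ([(X, m)] ! k) \<in> carr C
      \<and> cdom C (snd ([(X, m)] ! k)) = fst ([(X, m)] ! k) \<and> ccod C (snd ([(X, m)] ! k)) = U"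
    using v by (auto simp: vobj_iff)
  show "\<forall>i<length [(X, m)]. \<forall>j<length [(X, m)]. i \<noteq> j \<longrightarrow>
      \<not> (\<exists>m'\<in>carr C. cdom C m' = fst ([(X, m)] ! i) \<and> ccod C m' = fst ([(X, m)] ! j)
        \<and> ccomp C (snd ([(X, m)] ! j)) m' = snd ([(X, m)] ! i))"
    by auto
  show "viso C U ([U, X], [cid C U, m])
      (vunion (if True then vstar C U else ([], [])) (map fst [(X, m)], map snd [(X, m)]))"
    using viso_refl[OF cat v] by (simp add: vunion_def vstar_def)
qed

lemma aeu_wis_le_if_sparse_le:
  assumes cat: "is_cat C" and orb: "orbital C" and atm: "atomic C"
    and wis: "weak_indexing_system C D" and aeu: "almost_essentially_unital C D"
    and wis': "weak_indexing_system C D'"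
    and sparse: "\<And>W R. sparse_part C D W R \<Longrightarrow> D' W R"
  shows "D V S \<Longrightarrow> D' V S"
proof (induction "length (fst S)" arbitrary: S rule: less_induct)
  case less
  obtain xs ms where S: "S = (xs, ms)" by (cases S)
  have v: "vobj C V (xs, ms)" using weak_indexing_systemD(1)[OF wis less.prems] S by simp
  show ?case
  proof (cases "sparse C V S")
    case True
    then show ?thesis using sparse less.prems by (simp add: sparse_part_def)
  next
    case False
    then obtain i j m where ij: "i < length xs" "j < length xs" "i \<noteq> j"
      and m: "m \<in> carr C" "cdom C m = xs!i" "ccod C m = xs!j" "ccomp C (ms!j) m = ms!i"
      using sparse_if_no_map_between_orbits[OF cat v] S by blast
    define L where "L = filter (\<lambda>k. k \<noteq> i \<and> k \<noteq> j) [0..<length xs]"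
    have L: "distinct (j # i # L)" "set (j # i # L) = {..<length xs}"
      using ij unfolding L_def by auto
    have "length (j # L) < length xs"
      using distinct_card[OF L(1)] L(2) by simp
    moreover have "2 \<le> length xs" "set (j # L) \<subseteq> {..<length xs}" using ij L(2) by auto
    then have "D V (vselect (xs, ms) (j # L))"
      using aeu_vselect[OF cat wis aeu, of V "(xs, ms)"] less.prems S L(1) by simp
    ultimately have S1: "D' V (vselect (xs, ms) (j # L))"
      using less.hyps S by (simp add: vselect_def)
    have "D (xs!j) ([xs!j, xs!i], [cid C (xs!j), m])"
      using aeu_restriction_orbit_pair[OF cat orb atm wis aeu _ ij m] less.prems S by simp
    then have "D' (xs!j) ([xs!j, xs!i], [cid C (xs!j), m])"
      using sparse sparse_vstar_vunion_orbit[OF cat] weak_indexing_systemD(1)[OF wis]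
      by (simp add: sparse_part_def)
    then show ?thesis using wis_glue_orbit[OF cat orb wis' v L m(1,4) S1] S by simp
  qed
qed

theorem mainTheorem20:
  fixes T :: "('o, 'm) cat" and \<C> :: "('o, 'm) tcoll"
  assumes "is_cat T" and "orbital T" and "atomic T"
    and "weak_indexing_system T \<C>"
    and "almost_essentially_unital T \<C>"
  shows "\<C> = wis_closure T (sparse_part T \<C>)"
proof (intro ext iffI)
  fix V S
  assume "\<C> V S"
  then show "wis_closure T (sparse_part T \<C>) V S"
    unfolding wis_closure_def using aeu_wis_le_if_sparse_le[OF assms] by blast
next
  fix V S
  assume "wis_closure T (sparse_part T \<C>) V S"
  then show "\<C> V S"
    using assms(4) unfolding wis_closure_def sparse_part_def by blast
qed

end
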